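(* Let $A$ be a finite abelian $p$-group, $f\colon\mathbb{Z}_p^h\to A$ a continuous homomorphism, and $q\colon A\to A/\operatorname{im}(f)$ the quotient map. Then (1) $\mathcal{F}_f=q^*\mathcal{F}_{A/\operatorname{im}(f)}$; and (2) if $\operatorname{im}(f)\subseteq pA$, then $\mathcal{F}_f=\mathcal{F}_A$.
   Context: For a finite abelian group $B$, $\mathcal{F}_B$ denotes the family of all proper subgroups of $B$. $\mathcal{F}_f$ is the minimal family of subgroups of $A$ (closed under taking subgroups) containing every proper subgroup $H\subsetneq A$ through which $f$ factors. For a homomorphism $q\colon A\to A'$ and a family $\mathcal{F}$ of subgroups of $A'$, $q^*\mathcal{F}$ is the minimal family of proper subgroups of $A$ containing $\{q^{-1}(H)\mid H\in\mathcal{F}\}$. *)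

theory Defs
  imports "HOL-Algebra.Algebra"
begin

text \<open>p-adic integers as the inverse limit of the rings Z/p^n Z: a p-adic integer is a
  compatible sequence of residues x n in {0..<p^n}.\<close>
definition padic_int :: "nat \<Rightarrow> (nat \<Rightarrow> int) set" where
  "padic_int p = {x. \<forall>n. 0 \<le> x n \<and> x n < int p ^ n \<and> x (Suc n) mod (int p ^ n) = x n}"

text \<open>The additive group Z_p^h: tuples indexed by i < h (extensional outside), with
  componentwise addition computed level-wise modulo p^n.\<close>
definition padic_pow :: "nat \<Rightarrow> nat \<Rightarrow> (nat \<Rightarrow> nat \<Rightarrow> int) monoid" where
  "padic_pow p h =
     \<lparr> carrier = {x. (\<forall>i<h. x i \<in> padic_int p) \<and> (\<forall>i\<ge>h. x i = (\<lambda>_. 0))},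
       monoid.mult = (\<lambda>x y i n. if i < h then (x i n + y i n) mod (int p ^ n) else 0),
       one = (\<lambda>_ _. 0) \<rparr>"

text \<open>Continuity of a map Z_p^h \<rightarrow> A, where A is discrete and Z_p^h carries the
  profinite (p-adic) topology with basic neighbourhoods x + p^N Z_p^h.\<close>
definition padic_continuous :: "nat \<Rightarrow> nat \<Rightarrow> ((nat \<Rightarrow> nat \<Rightarrow> int) \<Rightarrow> 'a) \<Rightarrow> bool" where
  "padic_continuous p h f \<longleftrightarrow>
     (\<forall>x\<in>carrier (padic_pow p h). \<exists>N. \<forall>y\<in>carrier (padic_pow p h).
        (\<forall>i<h. x i N = y i N) \<longrightarrow> f y = f x)"

definition sub_closure :: "('a, 'b) monoid_scheme \<Rightarrow> 'a set set \<Rightarrow> 'a set set" where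
  "sub_closure G S = \<Inter>{\<F>. \<F> \<subseteq> {K. subgroup K G} \<and> S \<subseteq> \<F> \<and>
      (\<forall>K\<in>\<F>. \<forall>L. subgroup L G \<and> L \<subseteq> K \<longrightarrow> L \<in> \<F>)}"

definition proper_subgroups :: "('a, 'b) monoid_scheme \<Rightarrow> 'a set set" where
  "proper_subgroups B = {H. subgroup H B \<and> H \<noteq> carrier B}"

definition family_of_map :: "('a, 'b) monoid_scheme \<Rightarrow> ('c, 'd) monoid_scheme \<Rightarrow> ('c \<Rightarrow> 'a) \<Rightarrow> 'a set set" where
  "family_of_map A D f = sub_closure A {H. subgroup H A \<and> H \<noteq> carrier A \<and> f ` carrier D \<subseteq> H}"

definition pullback_family :: "('a, 'b) monoid_scheme \<Rightarrow> ('a \<Rightarrow> 'c) \<Rightarrow> 'c set set \<Rightarrow> 'a set set" where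
  "pullback_family A q \<F> = sub_closure A {{a \<in> carrier A. q a \<in> H} | H. H \<in> \<F>}"

end

theory Submission
  imports Defs
begin

(* The image I of f is a subgroup of A because Z_p^h is a group. Both families are generated by subgroups containing I, and part (1) is the
   correspondence theorem: the proper subgroups of A containing I are exactly the preimages of
   the proper subgroups of A/I.
   For part (2), a family closed under subgroups and generated by S consists of the subgroups
   lying below a member of S. Every proper subgroup lies in a maximal one, M, and M contains
   every p-th power a^p: otherwise M and a^p generate A, so a = m a^(pn) with m in M. Then the
   class of a in A/M is fixed by the (pn)-th power, hence by the (pn)^k-th power, which kills it
   because |A| = p^k. *)

lemma padic_int_mod_compatible:
  assumes "p > 0" and "\<And>n. z (Suc n) mod int p ^ n = z n mod int p ^ n"
  shows "(\<lambda>n. z n mod int p ^ n) \<in> padic_int p"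
proof -
  have "z (Suc n) mod int p ^ Suc n mod int p ^ n = z n mod int p ^ n" for n
    using assms(2)[of n] mod_mod_cancel[of "int p ^ n" "int p ^ Suc n"] by simp
  then show ?thesis using assms(1) by (simp add: padic_int_def)
qed

lemma padic_int_Suc_mod:
  "x \<in> padic_int p \<Longrightarrow> x (Suc n) mod int p ^ n = x n mod int p ^ n"
  by (simp add: padic_int_def)

lemma padic_int_add:
  "p > 0 \<Longrightarrow> x \<in> padic_int p \<Longrightarrow> y \<in> padic_int p \<Longrightarrow> (\<lambda>n. (x n + y n) mod int p ^ n) \<in> padic_int p"
  by (intro padic_int_mod_compatible mod_add_cong padic_int_Suc_mod)

lemma padic_int_uminus:
  "p > 0 \<Longrightarrow> x \<in> padic_int p \<Longrightarrow> (\<lambda>n. (- x n) mod int p ^ n) \<in> padic_int p"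
  by (intro padic_int_mod_compatible mod_minus_cong padic_int_Suc_mod)

lemma comm_group_padic_pow:
  assumes "p > 0"
  shows "comm_group (padic_pow p h)"
proof (rule comm_groupI)
  show "\<one>\<^bsub>padic_pow p h\<^esub> \<in> carrier (padic_pow p h)"
    using assms by (simp add: padic_pow_def padic_int_def)
next
  fix x y assume "x \<in> carrier (padic_pow p h)" "y \<in> carrier (padic_pow p h)"
  then show "x \<otimes>\<^bsub>padic_pow p h\<^esub> y \<in> carrier (padic_pow p h)"
    using padic_int_add[OF assms] by (simp add: padic_pow_def)
next
  fix x y :: "nat \<Rightarrow> nat \<Rightarrow> int"
  show "x \<otimes>\<^bsub>padic_pow p h\<^esub> y = y \<otimes>\<^bsub>padic_pow p h\<^esub> x"
    by (simp add: padic_pow_def fun_eq_iff add.commute)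
next
  fix x y z :: "nat \<Rightarrow> nat \<Rightarrow> int"
  show "x \<otimes>\<^bsub>padic_pow p h\<^esub> y \<otimes>\<^bsub>padic_pow p h\<^esub> z =
        x \<otimes>\<^bsub>padic_pow p h\<^esub> (y \<otimes>\<^bsub>padic_pow p h\<^esub> z)"
    by (simp add: padic_pow_def fun_eq_iff mod_add_left_eq mod_add_right_eq add.assoc)
next
  fix x assume x: "x \<in> carrier (padic_pow p h)"
  then show "\<one>\<^bsub>padic_pow p h\<^esub> \<otimes>\<^bsub>padic_pow p h\<^esub> x = x"
    by (auto simp: padic_pow_def padic_int_def fun_eq_iff)
  let ?y = "\<lambda>i n. if i < h then (- x i n) mod int p ^ n else 0"
  have "?y \<in> carrier (padic_pow p h)" "?y \<otimes>\<^bsub>padic_pow p h\<^esub> x = \<one>\<^bsub>padic_pow p h\<^esub>"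
    using x padic_int_uminus[OF assms] by (auto simp: padic_pow_def fun_eq_iff mod_add_left_eq)
  then show "\<exists>y\<in>carrier (padic_pow p h). y \<otimes>\<^bsub>padic_pow p h\<^esub> x = \<one>\<^bsub>padic_pow p h\<^esub>"
    by blast
qed

lemma sub_closure_eq_subgroups_below:
  assumes "S \<subseteq> {K. subgroup K G}"
  shows "sub_closure G S = {L. subgroup L G \<and> (\<exists>K\<in>S. L \<subseteq> K)}"
proof
  show "sub_closure G S \<subseteq> {L. subgroup L G \<and> (\<exists>K\<in>S. L \<subseteq> K)}"
    unfolding sub_closure_def
  proof (rule Inter_lower, intro CollectI conjI)
    show "S \<subseteq> {L. subgroup L G \<and> (\<exists>K\<in>S. L \<subseteq> K)}" using assms by blast
  qed auto
  show "{L. subgroup L G \<and> (\<exists>K\<in>S. L \<subseteq> K)} \<subseteq> sub_closure G S"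
    unfolding sub_closure_def by (intro subsetI InterI) auto
qed

lemma (in normal) proper_subgroups_above_eq_vimages:
  "{K. subgroup K G \<and> K \<noteq> carrier G \<and> H \<subseteq> K}
     = {{a \<in> carrier G. H #> a \<in> Q} | Q. Q \<in> proper_subgroups (G Mod H)}"
proof (rule Set.set_eqI, rule iffI)
  fix K assume "K \<in> {K. subgroup K G \<and> K \<noteq> carrier G \<and> H \<subseteq> K}"
  then have K: "subgroup K G" "K \<noteq> carrier G" "H \<subseteq> K" by auto
  interpret quot: group_hom G "G Mod H" "\<lambda>a. H #> a"
    using r_coset_hom_Mod by (simp add: group_hom_def group_hom_axioms_def factorgroup_is_group)
  let ?Q = "(\<lambda>a. H #> a) ` K"
  have coset_in_image: "a \<in> K" if a_carrier: "a \<in> carrier G" and a_image: "H #> a \<in> ?Q" for a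
  proof -
    obtain b where b: "b \<in> K" "H #> a = H #> b" using a_image by blast
    have "a \<in> H #> b" using rcos_self[OF a_carrier is_subgroup] b(2) by simp
    then obtain h where h: "h \<in> H" "a = h \<otimes> b" unfolding r_coset_def by blast
    then have "h \<in> K" using K(3) by blast
    then show "a \<in> K" using subgroup.m_closed[OF K(1) _ b(1)] h(2) by simp
  qed
  have "?Q \<noteq> carrier (G Mod H)"
  proof
    assume Q_full: "?Q = carrier (G Mod H)"
    have "carrier G \<subseteq> K"
    proof
      fix a assume a: "a \<in> carrier G"
      then have "H #> a \<in> carrier (G Mod H)" unfolding carrier_FactGroup by (rule imageI)
      then show "a \<in> K" using coset_in_image a Q_full by blast
    qed
    then show False using K(1,2) subgroup.subset by blast
  qed
  then have "?Q \<in> proper_subgroups (G Mod H)"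
    using quot.subgroup_img_is_subgroup[OF K(1)] by (simp add: proper_subgroups_def)
  moreover have "K = {a \<in> carrier G. H #> a \<in> ?Q}"
    using coset_in_image K(1) subgroup.subset by blast
  ultimately show "K \<in> {{a \<in> carrier G. H #> a \<in> Q} | Q. Q \<in> proper_subgroups (G Mod H)}"
    by (intro CollectI exI[where x = ?Q] conjI)
next
  fix K assume "K \<in> {{a \<in> carrier G. H #> a \<in> Q} | Q. Q \<in> proper_subgroups (G Mod H)}"
  then obtain Q where K: "K = {a \<in> carrier G. H #> a \<in> Q}"
    and Q: "subgroup Q (G Mod H)" "Q \<noteq> carrier (G Mod H)"
    unfolding proper_subgroups_def by blast
  have "subgroup K G"
    using factgroup_subgroup_union_subgroup[OF Q(1)] factgroup_subgroup_union_char[OF Q(1)] K by simp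
  moreover have "H \<subseteq> K"
  proof
    fix h assume "h \<in> H"
    then have "H #> h = \<one>\<^bsub>G Mod H\<^esub>" using rcos_const by simp
    then show "h \<in> K" using K subgroup.one_closed[OF Q(1)] \<open>h \<in> H\<close> subset by auto
  qed
  moreover have "K \<noteq> carrier G"
  proof
    assume "K = carrier G"
    then have "carrier (G Mod H) \<subseteq> Q" using K by (auto simp: carrier_FactGroup)
    then show False using Q subgroup.subset by blast
  qed
  ultimately show "K \<in> {K. subgroup K G \<and> K \<noteq> carrier G \<and> H \<subseteq> K}" by blast
qed

definition maximal_subgroup :: "'a set \<Rightarrow> ('a, 'b) monoid_scheme \<Rightarrow> bool" where
  "maximal_subgroup M G \<longleftrightarrow> subgroup M G \<and> M \<noteq> carrier G \<and>
     (\<forall>K. subgroup K G \<and> M \<subseteq> K \<longrightarrow> K = M \<or> K = carrier G)"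

lemma (in group) ex_maximal_subgroup_above:
  assumes "finite (carrier G)" "subgroup L G" "L \<noteq> carrier G"
  shows "\<exists>M. maximal_subgroup M G \<and> L \<subseteq> M"
proof -
  let ?P = "{M. subgroup M G \<and> M \<noteq> carrier G \<and> L \<subseteq> M}"
  have "?P \<subseteq> Pow (carrier G)" by (auto dest: subgroup.subset)
  then have "finite ?P" using assms(1) by (simp add: finite_subset)
  moreover have "L \<in> ?P" using assms(2,3) by blast
  ultimately obtain M where M: "M \<in> ?P" and max: "\<forall>K\<in>?P. M \<subseteq> K \<longrightarrow> M = K"
    using finite_has_maximal2[of ?P L] by blast
  have "K = M \<or> K = carrier G" if "subgroup K G" "M \<subseteq> K" for K
    using M max that by blast
  then have "maximal_subgroup M G"
    using M unfolding maximal_subgroup_def by blast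
  then show ?thesis using M by blast
qed

lemma (in comm_group) maximal_subgroup_mult_generate:
  assumes max: "maximal_subgroup M G" and x: "x \<in> carrier G" "x \<notin> M"
  shows "M <#> generate G {x} = carrier G"
proof -
  have M: "subgroup M G" using max by (simp add: maximal_subgroup_def)
  have "subgroup (M <#> generate G {x}) G"
    using mult_subgroups[OF M generate_is_subgroup] x by simp
  moreover have "M \<subseteq> M <#> generate G {x}"
  proof
    fix m assume "m \<in> M"
    then have "m = m \<otimes> \<one>" using M subgroup.mem_carrier by (metis r_one)
    then show "m \<in> M <#> generate G {x}"
      unfolding set_mult_def using \<open>m \<in> M\<close> generate.one by blast
  qed
  moreover have "x \<in> M <#> generate G {x}"
    using generate.incl[of x "{x}" G] subgroup.one_closed[OF M] x
    unfolding set_mult_def by force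
  ultimately show ?thesis
    using max x unfolding maximal_subgroup_def by blast
qed

lemma (in group) int_pow_fixed_iterate:
  assumes "x \<in> carrier G" "x [^] (N::int) = x"
  shows "x [^] (N ^ t) = x"
proof (induction t)
  case (Suc t)
  have "x [^] (N ^ Suc t) = (x [^] (N ^ t)) [^] N"
    using assms(1) by (simp add: int_pow_pow mult.commute)
  then show ?case using Suc.IH assms(2) by simp
qed (use assms(1) in simp)

lemma (in normal) mem_if_rcos_int_pow_fixed:
  assumes a: "a \<in> carrier G" and fixed: "H #> a [^] (N::int) = H #> a"
    and unipotent: "a [^] (N ^ k) = \<one>"
  shows "a \<in> H"
proof -
  have "(H #> a) [^]\<^bsub>G Mod H\<^esub> N = H #> a"
    using FactGroup_int_pow[OF a] fixed by simp
  then have "(H #> a) [^]\<^bsub>G Mod H\<^esub> (N ^ k) = H #> a"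
    using group.int_pow_fixed_iterate[OF factorgroup_is_group] a
    by (simp add: carrier_FactGroup)
  then have "H #> a = H #> \<one>"
    using FactGroup_int_pow[OF a] unipotent by metis
  then show ?thesis using rcos_self[OF a is_subgroup] subset by (metis coset_mult_one)
qed

lemma (in comm_group) pow_mem_maximal_subgroup:
  assumes ord: "order G = p ^ k" and max: "maximal_subgroup M G" and a: "a \<in> carrier G"
  shows "a [^] p \<in> M"
proof (rule ccontr)
  assume notin: "a [^] p \<notin> M"
  have M: "subgroup M G" using max by (simp add: maximal_subgroup_def)
  obtain m g where "m \<in> M" and g: "g \<in> generate G {a [^] p}" and "a = m \<otimes> g"
    using maximal_subgroup_mult_generate[OF max _ notin] a unfolding set_mult_def by blast
  then have "a \<in> M #> g" unfolding r_coset_def by blast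
  moreover obtain n :: int where "g = (a [^] p) [^] n" using g generate_pow a by auto
  moreover have "(a [^] p) [^] n = a [^] (int p * n)"
    using a int_pow_pow[of a "int p" n] by (simp add: int_pow_int)
  ultimately have "M #> a [^] (int p * n) = M #> a"
    using repr_independence[OF _ _ M] a by simp
  moreover have "a [^] ((int p * n) ^ k) = \<one>"
  proof -
    have "a [^] ((int p * n) ^ k) = (a [^] int (order G)) [^] (n ^ k)"
      using a ord by (simp add: int_pow_pow power_mult_distrib)
    then show ?thesis using pow_order_eq_1[OF a] a by (simp add: int_pow_int)
  qed
  ultimately have "a \<in> M"
    using normal.mem_if_rcos_int_pow_fixed[OF subgroup_imp_normal[OF M] a] by blast
  then show False
    using notin subgroup_int_pow_closed[OF M, of a "int p"] by (simp add: int_pow_int)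
qed

lemma (in comm_group) sub_closure_subgroups_above_pth_powers:
  assumes fin: "finite (carrier G)" and ord: "order G = p ^ k"
    and I: "I \<subseteq> {a [^] p | a. a \<in> carrier G}"
  shows "sub_closure G {K. subgroup K G \<and> K \<noteq> carrier G \<and> I \<subseteq> K} = proper_subgroups G"
proof -
  have "L \<in> proper_subgroups G \<longleftrightarrow>
      subgroup L G \<and> (\<exists>K. subgroup K G \<and> K \<noteq> carrier G \<and> I \<subseteq> K \<and> L \<subseteq> K)" for L
  proof
    assume L: "L \<in> proper_subgroups G"
    then obtain M where M: "maximal_subgroup M G" "L \<subseteq> M"
      using ex_maximal_subgroup_above[OF fin] by (auto simp: proper_subgroups_def)
    moreover have "I \<subseteq> M" using pow_mem_maximal_subgroup[OF ord M(1)] I by blast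
    ultimately show "subgroup L G \<and> (\<exists>K. subgroup K G \<and> K \<noteq> carrier G \<and> I \<subseteq> K \<and> L \<subseteq> K)"
      using L by (auto simp: maximal_subgroup_def proper_subgroups_def)
  next
    assume "subgroup L G \<and> (\<exists>K. subgroup K G \<and> K \<noteq> carrier G \<and> I \<subseteq> K \<and> L \<subseteq> K)"
    then show "L \<in> proper_subgroups G"
      unfolding proper_subgroups_def by (blast dest: subgroup.subset)
  qed
  then show ?thesis by (subst sub_closure_eq_subgroups_below) auto
qed

theorem lemma6p5:
  fixes A :: "('a, 'b) monoid_scheme" and p h :: nat and f :: "(nat \<Rightarrow> nat \<Rightarrow> int) \<Rightarrow> 'a"
  assumes "comm_group A" and "finite (carrier A)" and "Factorial_Ring.prime p"
    and "\<exists>k. order A = p ^ k"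
    and "f \<in> hom (padic_pow p h) A"
    and "padic_continuous p h f"
  shows "(family_of_map A (padic_pow p h) f
           = pullback_family A (\<lambda>a. f ` carrier (padic_pow p h) #>\<^bsub>A\<^esub> a)
               (proper_subgroups (A Mod (f ` carrier (padic_pow p h)))))
         \<and> (f ` carrier (padic_pow p h) \<subseteq> {a [^]\<^bsub>A\<^esub> p | a. a \<in> carrier A}
           \<longrightarrow> family_of_map A (padic_pow p h) f = proper_subgroups A)"
proof -
  let ?I = "f ` carrier (padic_pow p h)"
  have "group_hom (padic_pow p h) A f"
    using comm_group_padic_pow[OF prime_gt_0_nat[OF assms(3)]] assms(1,5)
    by (simp add: group_hom_def group_hom_axioms_def comm_group.axioms(2))
  then have "?I \<lhd> A"
    using group_hom.img_is_subgroup comm_group.subgroup_imp_normal[OF assms(1)] by blast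
  have generators: "family_of_map A (padic_pow p h) f
      = sub_closure A {K. subgroup K A \<and> K \<noteq> carrier A \<and> ?I \<subseteq> K}"
    unfolding family_of_map_def by simp
  obtain k where "order A = p ^ k" using assms(4) by blast
  have "sub_closure A {K. subgroup K A \<and> K \<noteq> carrier A \<and> ?I \<subseteq> K}
      = pullback_family A (\<lambda>a. ?I #>\<^bsub>A\<^esub> a) (proper_subgroups (A Mod ?I))"
    unfolding pullback_family_def normal.proper_subgroups_above_eq_vimages[OF \<open>?I \<lhd> A\<close>] ..
  then show ?thesis
    unfolding generators
    using comm_group.sub_closure_subgroups_above_pth_powers[OF assms(1,2) \<open>order A = p ^ k\<close>]
    by blast
qed

end
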